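(* $$\sum_{n\ge0}\Bigl(\sum_{\sigma\in\mathfrak S_{n+1}}u^{2{\rm M}(\sigma)}v^{n-2{\rm M}(\sigma)}\alpha^{{\rm LRmin}(\sigma)-1}\beta^{{\rm RLmin}(\sigma)-1}\Bigr)\frac{t^n}{n!}=\left(\frac{\sqrt{v^2-u^2}}{\sqrt{v^2-u^2}\cosh\bigl(t\sqrt{v^2-u^2}\bigr)-v\sinh\bigl(t\sqrt{v^2-u^2}\bigr)}\right)^{\alpha+\beta}.$$
   Context: For $\sigma=\sigma_1\cdots\sigma_m\in\mathfrak S_m$: ${\rm M}(\sigma)$ is the number of $i$ with $1<i<m$ and $\sigma_{i-1}<\sigma_i>\sigma_{i+1}$; ${\rm LRmin}(\sigma)$ is the number of $i$ with $\sigma_j>\sigma_i$ for all $j<i$; ${\rm RLmin}(\sigma)$ is the number of $i$ with $\sigma_j>\sigma_i$ for all $j>i$. Identity of formal power series in $t$; powers of series with constant term $1$ are $G^c=\exp(c\log G)$. *)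

theory Defs
  imports Complex_Main "HOL-Computational_Algebra.Formal_Power_Series"
    "HOL-Combinatorics.Multiset_Permutations"
begin

text \<open>Permutations of {1..m} are represented as lists (one-line notation), 0-indexed.\<close>

definition peaks :: "nat list \<Rightarrow> nat" where
  "peaks s = card {i. 0 < i \<and> i + 1 < length s \<and> s ! (i - 1) < s ! i \<and> s ! i > s ! (i + 1)}"

definition lrmin :: "nat list \<Rightarrow> nat" where
  "lrmin s = card {i. i < length s \<and> (\<forall>j<i. s ! j > s ! i)}"

definition rlmin :: "nat list \<Rightarrow> nat" where
  "rlmin s = card {i. i < length s \<and> (\<forall>j. i < j \<and> j < length s \<longrightarrow> s ! j > s ! i)}"

definition fps_cosh :: "'a::field_char_0 \<Rightarrow> 'a fps" where
  "fps_cosh c = fps_const (1/2) * (fps_exp c + fps_exp (- c))"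

definition fps_sinh :: "'a::field_char_0 \<Rightarrow> 'a fps" where
  "fps_sinh c = fps_const (1/2) * (fps_exp c - fps_exp (- c))"

text \<open>Power of a series G with constant term 1: G^c = exp(c log G).\<close>

definition fps_powr :: "'a::field_char_0 fps \<Rightarrow> 'a \<Rightarrow> 'a fps" where
  "fps_powr G c = fps_exp 1 oo (fps_const c * (fps_ln 1 oo (G - 1)))"

end

(*
  Cut a permutation at its minimum: sigma = L 1 R. The entry 1 is never a peak, the
  left-to-right minima of sigma other than 1 lie in L and its right-to-left minima other
  than 1 lie in R, so the summand factors into a weight of L, read against a smaller right
  neighbour, times a weight of R, read against a smaller left neighbour. Cutting these words
  again at their minima gives binomial convolution recursions, i.e. the differential
  equations H' = H^2 - s^2, X' = alpha X H, Y' = beta H Y for the exponential generating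
  functions, with F = X Y, H(0) = v and X(0) = Y(0) = 1; here H is the generating function
  of words with smaller neighbours on both sides. The Riccati equation is linearised by
  H = -Q'/Q for Q = s cosh(st) - v sinh(st), and then F and (s/Q)^(alpha+beta) both solve
  F' = (alpha + beta) H F with F(0) = 1.
*)

theory Submission
  imports Defs
begin

unbundle fps_syntax

section \<open>Peaks and left-to-right minima\<close>

lemma peaks_Cons:
  "peaks (x # ys) = (if 2 \<le> length ys \<and> x < ys ! 0 \<and> ys ! 1 < ys ! 0 then 1 else 0) + peaks ys"
proof -
  define P where "P s = {i. 0 < i \<and> i + 1 < length s \<and> s ! (i - 1) < s ! i \<and> s ! i > s ! (i + 1)}"
    for s :: "nat list"
  have "P (x # ys) = (if 2 \<le> length ys \<and> x < ys ! 0 \<and> ys ! 1 < ys ! 0 then {1} else {}) \<union> Suc ` P ys"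
  proof (intro set_eqI iffI)
    fix i assume "i \<in> P (x # ys)"
    then show "i \<in> (if 2 \<le> length ys \<and> x < ys ! 0 \<and> ys ! 1 < ys ! 0 then {1} else {}) \<union> Suc ` P ys"
      unfolding P_def by (cases i; cases "i - 1") (auto simp: image_iff)
  qed (auto simp: P_def nth_Cons' split: if_splits)
  moreover have "finite (P ys)"
    unfolding P_def by (rule finite_subset[of _ "{..<length ys}"]) auto
  moreover have "1 \<notin> Suc ` P ys"
    unfolding P_def by auto
  ultimately show ?thesis
    unfolding peaks_def P_def[symmetric] by (simp add: card_image)
qed

lemma peaks_Nil [simp]: "peaks [] = 0"
  and peaks_singleton [simp]: "peaks [x] = 0"
  and peaks_doubleton [simp]: "peaks [x, y] = 0"
  by (auto simp: peaks_def card_eq_0_iff)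

lemma peaks_Cons_Cons_Cons [simp]:
  "peaks (x # y # z # zs) = (if x < y \<and> z < y then 1 else 0) + peaks (y # z # zs)"
  by (simp add: peaks_Cons[of x])

lemma peaks_less_length: "xs \<noteq> [] \<Longrightarrow> 2 * peaks xs < length xs"
proof (induction xs rule: induct_list012)
  case (3 x y zs)
  show ?case
  proof (cases zs)
    case (Cons z zs')
    have "peaks (y # z # zs') = peaks (z # zs')" if "z < y"
      using that by (cases zs') auto
    then show ?thesis
      using 3 Cons by auto
  qed simp
qed simp_all

lemma peaks_Cons_cong:
  "(ys \<noteq> [] \<Longrightarrow> a < hd ys \<longleftrightarrow> b < hd ys) \<Longrightarrow> peaks (a # ys) = peaks (b # ys)"
  by (cases ys; cases "tl ys") auto

lemma peaks_snoc_cong: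
  "(xs \<noteq> [] \<Longrightarrow> a < last xs \<longleftrightarrow> b < last xs) \<Longrightarrow> peaks (xs @ [a]) = peaks (xs @ [b])"
proof (induction xs rule: induct_list012)
  case (3 x y zs)
  then show ?case by (cases zs) auto
qed simp_all

lemma peaks_append_valley:
  "xs = [] \<or> ys = [] \<or> m < last xs \<or> m < hd ys \<Longrightarrow>
    peaks (xs @ m # ys) = peaks (xs @ [m]) + peaks (m # ys)"
proof (induction xs rule: induct_list012)
  case (2 x)
  then show ?case by (cases ys) auto
next
  case (3 x y zs)
  then show ?case by (cases zs) auto
qed simp

lemma lrmin_snoc: "lrmin (xs @ [y]) = lrmin xs + (if \<forall>z\<in>set xs. y < z then 1 else 0)"
proof -
  define P where "P s = {i. i < length s \<and> (\<forall>j<i. s ! j > s ! i)}" for s :: "nat list"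
  have "P (xs @ [y]) = P xs \<union> (if \<forall>z\<in>set xs. y < z then {length xs} else {})"
    unfolding P_def using nth_mem[of _ xs]
    by (auto simp: nth_append in_set_conv_nth less_Suc_eq split: if_splits)
  moreover have "finite (P xs)" "length xs \<notin> P xs"
    unfolding P_def by auto
  ultimately show ?thesis
    unfolding lrmin_def P_def[symmetric] by auto
qed

lemma rlmin_Cons: "rlmin (x # xs) = rlmin xs + (if \<forall>z\<in>set xs. x < z then 1 else 0)"
proof -
  define P where "P s = {i. i < length s \<and> (\<forall>j. i < j \<and> j < length s \<longrightarrow> s ! j > s ! i)}"
    for s :: "nat list"
  have "P (x # xs) = Suc ` P xs \<union> (if \<forall>z\<in>set xs. x < z then {0} else {})"
  proof (intro set_eqI iffI)
    fix i assume i: "i \<in> P (x # xs)"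
    show "i \<in> Suc ` P xs \<union> (if \<forall>z\<in>set xs. x < z then {0} else {})"
    proof (cases i)
      case 0
      have "x < xs ! k" if "k < length xs" for k
        using i 0 that spec[of _ "Suc k"] unfolding P_def by auto
      then show ?thesis using 0 by (auto simp: in_set_conv_nth)
    next
      case (Suc k)
      have "xs ! k < xs ! j" if "k < j" "j < length xs" for j
        using i Suc that spec[of _ "Suc j"] unfolding P_def by auto
      then have "k \<in> P xs"
        using i Suc unfolding P_def by auto
      then show ?thesis using Suc by simp
    qed
  qed (auto simp: P_def nth_Cons' Suc_less_eq2 split: if_splits)
  moreover have "finite (P xs)" "0 \<notin> Suc ` P xs"
    unfolding P_def by auto
  ultimately show ?thesis
    unfolding rlmin_def P_def[symmetric] by (auto simp: card_image)
qed

lemma lrmin_append_min: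
  "\<forall>z\<in>set xs. m < z \<Longrightarrow> \<forall>z\<in>set ys. m < z \<Longrightarrow> lrmin (xs @ m # ys) = lrmin xs + 1"
proof (induction ys rule: rev_induct)
  case Nil
  then show ?case by (simp add: lrmin_snoc)
next
  case (snoc y ys)
  then show ?case using lrmin_snoc[of "xs @ m # ys" y] by auto
qed

lemma rlmin_append_min:
  "\<forall>z\<in>set xs. m < z \<Longrightarrow> \<forall>z\<in>set ys. m < z \<Longrightarrow> rlmin (xs @ m # ys) = rlmin ys + 1"
proof (induction xs)
  case Nil
  then show ?case by (simp add: rlmin_Cons)
next
  case (Cons x xs)
  then show ?case using rlmin_Cons[of x "xs @ m # ys"] by auto
qed

text \<open>For a permutation \<open>\<sigma>\<close> of length \<open>n + 1\<close> this is the factor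
  \<open>u ^ (2 * peaks \<sigma>) * v ^ (n - 2 * peaks \<sigma>)\<close> of the theorem.\<close>

definition peak_weight :: "'a::comm_semiring_1 \<Rightarrow> 'a \<Rightarrow> nat list \<Rightarrow> 'a" where
  "peak_weight u v w = u ^ (2 * peaks w) * v ^ (length w - 1 - 2 * peaks w)"

lemma peak_weight_append_valley:
  assumes "xs = [] \<or> ys = [] \<or> m < last xs \<or> m < hd ys"
    and "xs \<noteq> [] \<Longrightarrow> m < last xs \<longleftrightarrow> b < last xs"
    and "ys \<noteq> [] \<Longrightarrow> m < hd ys \<longleftrightarrow> b < hd ys"
  shows "peak_weight u v (xs @ m # ys) = peak_weight u v (xs @ [b]) * peak_weight u v (b # ys)"
proof -
  have peaks: "peaks (xs @ m # ys) = peaks (xs @ [b]) + peaks (b # ys)"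
    using peaks_append_valley[OF assms(1)] peaks_snoc_cong[OF assms(2)] peaks_Cons_cong[OF assms(3)]
    by simp
  have "2 * peaks (xs @ [b]) < length (xs @ [b])" "2 * peaks (b # ys) < length (b # ys)"
    by (rule peaks_less_length; simp)+
  then have "length (xs @ m # ys) - 1 - 2 * peaks (xs @ m # ys)
      = (length (xs @ [b]) - 1 - 2 * peaks (xs @ [b])) + (length (b # ys) - 1 - 2 * peaks (b # ys))"
    unfolding peaks by simp
  then show ?thesis
    unfolding peak_weight_def peaks by (simp add: power_add mult_ac)
qed

text \<open>The words below are permutations of sets of positive integers, so the padding
  \<open>0\<close> stands for a neighbour smaller than every entry.\<close>

definition inner_weight :: "'a::comm_semiring_1 \<Rightarrow> 'a \<Rightarrow> nat list \<Rightarrow> 'a" where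
  "inner_weight u v w = peak_weight u v (0 # w @ [0])"

definition left_weight :: "'a::comm_semiring_1 \<Rightarrow> 'a \<Rightarrow> 'a \<Rightarrow> nat list \<Rightarrow> 'a" where
  "left_weight u v a w = peak_weight u v (w @ [0]) * a ^ lrmin w"

definition right_weight :: "'a::comm_semiring_1 \<Rightarrow> 'a \<Rightarrow> 'a \<Rightarrow> nat list \<Rightarrow> 'a" where
  "right_weight u v b w = peak_weight u v (0 # w) * b ^ rlmin w"

lemma inner_weight_Nil [simp]: "inner_weight u v [] = v"
  and inner_weight_singleton: "0 < m \<Longrightarrow> inner_weight u v [m] = u\<^sup>2"
  by (simp_all add: inner_weight_def peak_weight_def)

lemma inner_weight_append_min:
  assumes "\<forall>z\<in>set L. m < z" "\<forall>z\<in>set R. m < z" "L \<noteq> [] \<or> R \<noteq> []"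
  shows "inner_weight u v (L @ m # R) = inner_weight u v L * inner_weight u v R"
proof -
  have "peak_weight u v ((0 # L) @ m # R @ [0])
      = peak_weight u v ((0 # L) @ [0]) * peak_weight u v (0 # R @ [0])"
    by (rule peak_weight_append_valley)
      (use assms in \<open>cases L rule: rev_cases; cases R; auto\<close>)+
  then show ?thesis by (simp add: inner_weight_def)
qed

lemma left_weight_append_min:
  assumes "\<forall>z\<in>set L. m < z" "\<forall>z\<in>set R. m < z"
  shows "left_weight u v a (L @ m # R) = a * left_weight u v a L * inner_weight u v R"
proof -
  have "peak_weight u v (L @ m # R @ [0]) = peak_weight u v (L @ [0]) * peak_weight u v (0 # R @ [0])"
    by (rule peak_weight_append_valley)
      (use assms in \<open>cases L rule: rev_cases; cases R; auto\<close>)+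
  then show ?thesis
    using lrmin_append_min[OF assms]
    by (simp add: left_weight_def inner_weight_def mult_ac)
qed

lemma right_weight_append_min:
  assumes "\<forall>z\<in>set L. m < z" "\<forall>z\<in>set R. m < z"
  shows "right_weight u v b (L @ m # R) = b * inner_weight u v L * right_weight u v b R"
proof -
  have "peak_weight u v ((0 # L) @ m # R) = peak_weight u v ((0 # L) @ [0]) * peak_weight u v (0 # R)"
    by (rule peak_weight_append_valley)
      (use assms in \<open>cases L rule: rev_cases; cases R; auto\<close>)+
  then show ?thesis
    using rlmin_append_min[OF assms]
    by (simp add: right_weight_def inner_weight_def mult_ac)
qed

lemma peak_weight_append_min:
  assumes "\<forall>z\<in>set L. m < z" "\<forall>z\<in>set R. m < z"
  shows "peak_weight u v (L @ m # R) * a ^ (lrmin (L @ m # R) - 1) * b ^ (rlmin (L @ m # R) - 1)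
    = left_weight u v a L * right_weight u v b R"
proof -
  have "peak_weight u v (L @ m # R) = peak_weight u v (L @ [0]) * peak_weight u v (0 # R)"
    by (rule peak_weight_append_valley)
      (use assms in \<open>cases L rule: rev_cases; cases R; auto\<close>)+
  then show ?thesis
    using lrmin_append_min[OF assms] rlmin_append_min[OF assms]
    by (simp add: left_weight_def right_weight_def mult_ac)
qed

section \<open>Summing over permutations by removing the minimum\<close>

lemma sum_permutations_of_set_split:
  fixes g :: "'b list \<Rightarrow> 'a::comm_monoid_add"
  assumes "finite S" "m \<in> S"
  shows "(\<Sum>\<sigma>\<in>permutations_of_set S. g \<sigma>) =
    (\<Sum>T\<in>Pow (S - {m}). \<Sum>L\<in>permutations_of_set T. \<Sum>R\<in>permutations_of_set (S - {m} - T). g (L @ m # R))"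
proof -
  define A where "A = S - {m}"
  define before where "before \<sigma> = takeWhile (\<lambda>x. x \<noteq> m) \<sigma>" for \<sigma>
  define after where "after \<sigma> = tl (dropWhile (\<lambda>x. x \<noteq> m) \<sigma>)" for \<sigma>
  have "(\<Sum>T\<in>Pow A. \<Sum>L\<in>permutations_of_set T. \<Sum>R\<in>permutations_of_set (A - T). g (L @ m # R))
      = (\<Sum>(T, L, R)\<in>Sigma (Pow A) (\<lambda>T. permutations_of_set T \<times> permutations_of_set (A - T)).
          g (L @ m # R))"
    using assms(1) by (simp add: A_def sum.cartesian_product sum.Sigma)
  also have "\<dots> = (\<Sum>\<sigma>\<in>permutations_of_set S. g \<sigma>)"
  proof (rule sum.reindex_bij_witness[where i = "\<lambda>\<sigma>. (set (before \<sigma>), before \<sigma>, after \<sigma>)"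
        and j = "\<lambda>(T, L, R). L @ m # R"])
    fix \<sigma> assume "\<sigma> \<in> permutations_of_set S"
    then have \<sigma>: "set \<sigma> = S" "distinct \<sigma>"
      by (auto simp: permutations_of_set_def)
    have "dropWhile (\<lambda>x. x \<noteq> m) \<sigma> = m # after \<sigma>"
      using \<sigma> assms(2) hd_dropWhile[of "\<lambda>x. x \<noteq> m" \<sigma>]
      by (cases "dropWhile (\<lambda>x. x \<noteq> m) \<sigma>") (auto simp: after_def dropWhile_eq_Nil_conv)
    then have decomp: "\<sigma> = before \<sigma> @ m # after \<sigma>"
      by (metis before_def takeWhile_dropWhile_id)
    then show "(case (set (before \<sigma>), before \<sigma>, after \<sigma>) of (T, L, R) \<Rightarrow> L @ m # R) = \<sigma>"
      by simp
    have "distinct (before \<sigma> @ m # after \<sigma>)" "set (before \<sigma> @ m # after \<sigma>) = S"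
      using \<sigma> by (simp_all only: decomp[symmetric])
    then show "(set (before \<sigma>), before \<sigma>, after \<sigma>)
        \<in> Sigma (Pow A) (\<lambda>T. permutations_of_set T \<times> permutations_of_set (A - T))"
      by (auto simp: A_def permutations_of_set_def)
  next
    fix q assume "q \<in> Sigma (Pow A) (\<lambda>T. permutations_of_set T \<times> permutations_of_set (A - T))"
    then obtain T L R where q: "q = (T, L, R)" and T: "T \<subseteq> A"
      and L: "set L = T" "distinct L" and R: "set R = A - T" "distinct R"
      by (auto simp: permutations_of_set_def)
    have "m \<notin> set L"
      using L T by (auto simp: A_def)
    then have "before (L @ m # R) = L" "after (L @ m # R) = R"
      by (induction L) (auto simp: before_def after_def)
    then show "(set (before (case q of (T, L, R) \<Rightarrow> L @ m # R)),
        before (case q of (T, L, R) \<Rightarrow> L @ m # R), after (case q of (T, L, R) \<Rightarrow> L @ m # R)) = q"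
      using L by (simp add: q)
    show "(case q of (T, L, R) \<Rightarrow> L @ m # R) \<in> permutations_of_set S"
      using L R T assms(2) by (auto simp: q permutations_of_set_def A_def)
  qed (simp add: case_prod_unfold)
  finally show ?thesis by (simp add: A_def)
qed

lemma sum_Pow_card:
  fixes F :: "nat \<Rightarrow> 'a::comm_semiring_1"
  assumes "finite A"
  shows "(\<Sum>T\<in>Pow A. F (card T)) = (\<Sum>k\<le>card A. of_nat (card A choose k) * F k)"
proof -
  have "(\<Sum>T\<in>Pow A. F (card T)) = (\<Sum>k\<le>card A. \<Sum>T\<in>{T\<in>Pow A. card T = k}. F (card T))"
    using assms by (intro sum.group[symmetric]) (auto intro: card_mono)
  also have "\<dots> = (\<Sum>k\<le>card A. of_nat (card A choose k) * F k)"
  proof (rule sum.cong)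
    fix k
    have "card {T\<in>Pow A. card T = k} = card A choose k"
      using n_subsets[OF assms, of k] by (simp add: conj_commute)
    then show "(\<Sum>T\<in>{T\<in>Pow A. card T = k}. F (card T)) = of_nat (card A choose k) * F k"
      by (simp add: mult_of_nat_commute)
  qed simp
  finally show ?thesis .
qed

lemma sum_permutations_of_set_split_Min:
  fixes f g h :: "'b::linorder list \<Rightarrow> 'a::comm_semiring_1"
  assumes S: "finite S" "S \<noteq> {}"
    and split: "\<And>L R. \<forall>z\<in>set L. Min S < z \<Longrightarrow> \<forall>z\<in>set R. Min S < z \<Longrightarrow>
      set L \<union> set R = S - {Min S} \<Longrightarrow> f (L @ Min S # R) = c * g L * h R"
    and G: "\<And>T. T \<subseteq> S - {Min S} \<Longrightarrow> (\<Sum>w\<in>permutations_of_set T. g w) = G (card T)"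
    and H: "\<And>T. T \<subseteq> S - {Min S} \<Longrightarrow> (\<Sum>w\<in>permutations_of_set T. h w) = H (card T)"
  shows "(\<Sum>\<sigma>\<in>permutations_of_set S. f \<sigma>) =
    c * (\<Sum>k\<le>card S - 1. of_nat (card S - 1 choose k) * G k * H (card S - 1 - k))"
proof -
  define m where "m = Min S"
  define A where "A = S - {m}"
  have m: "m \<in> S" and A: "finite A" "card A = card S - 1"
    using S by (simp_all add: m_def A_def)
  have "(\<Sum>\<sigma>\<in>permutations_of_set S. f \<sigma>) =
      (\<Sum>T\<in>Pow A. \<Sum>L\<in>permutations_of_set T. \<Sum>R\<in>permutations_of_set (A - T). c * g L * h R)"
    unfolding sum_permutations_of_set_split[OF S(1) m] A_def[symmetric]
  proof (intro sum.cong refl)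
    fix T L R assume "T \<in> Pow A" "L \<in> permutations_of_set T" "R \<in> permutations_of_set (A - T)"
    then have "set L \<union> set R = S - {Min S}" "set L \<subseteq> S - {Min S}" "set R \<subseteq> S - {Min S}"
      by (auto simp: permutations_of_set_def A_def m_def)
    moreover have "Min S < z" if "z \<in> S - {Min S}" for z
      using S that by (auto simp: less_le)
    ultimately show "f (L @ m # R) = c * g L * h R"
      unfolding m_def by (intro split) auto
  qed
  also have "\<dots> = c * (\<Sum>T\<in>Pow A. G (card T) * H (card A - card T))"
    unfolding sum_distrib_left
  proof (intro sum.cong refl)
    fix T assume "T \<in> Pow A"
    then have T: "T \<subseteq> S - {Min S}" "A - T \<subseteq> S - {Min S}" "card (A - T) = card A - card T"
      using A by (auto simp: A_def m_def card_Diff_subset finite_subset)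
    have "(\<Sum>L\<in>permutations_of_set T. \<Sum>R\<in>permutations_of_set (A - T). c * g L * h R)
        = c * ((\<Sum>L\<in>permutations_of_set T. g L) * (\<Sum>R\<in>permutations_of_set (A - T). h R))"
      unfolding sum_product by (simp add: sum_distrib_left mult.assoc)
    then show "(\<Sum>L\<in>permutations_of_set T. \<Sum>R\<in>permutations_of_set (A - T). c * g L * h R)
        = c * (G (card T) * H (card A - card T))"
      using G H T by simp
  qed
  also have "\<dots> = c * (\<Sum>k\<le>card A. of_nat (card A choose k) * G k * H (card A - k))"
    using sum_Pow_card[OF A(1), of "\<lambda>k. G k * H (card A - k)"] by (simp add: mult.assoc)
  finally show ?thesis by (simp add: A)
qed

lemma finite_remove_Min_induct [consumes 1, case_names empty remove_Min]:
  fixes S :: "'a::linorder set"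
  assumes "finite S" "P {}"
    and "\<And>S. finite S \<Longrightarrow> S \<noteq> {} \<Longrightarrow> (\<And>T. T \<subseteq> S - {Min S} \<Longrightarrow> P T) \<Longrightarrow> P S"
  shows "P S"
  using assms(1)
proof (induction S rule: finite_psubset_induct)
  case (psubset S)
  show ?case
  proof (cases "S = {}")
    case False
    show ?thesis
    proof (rule assms(3)[OF psubset.hyps False])
      fix T assume "T \<subseteq> S - {Min S}"
      then have "T \<subset> S"
        using Min_in[OF psubset.hyps False] by blast
      then show "P T" by (rule psubset.IH)
    qed
  qed (simp add: assms(2))
qed

section \<open>The coefficient recursions\<close>

text \<open>For \<open>n = 1\<close> the single entry is a peak between its two zero neighbours, whereas the
  convolution would give \<open>v\<^sup>2\<close>; this is where the constant \<open>u\<^sup>2 - v\<^sup>2\<close> of the Riccati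
  equation comes from.\<close>

fun inner_poly :: "'a::comm_semiring_1 \<Rightarrow> 'a \<Rightarrow> nat \<Rightarrow> 'a" where
  "inner_poly u v 0 = v"
| "inner_poly u v (Suc 0) = u\<^sup>2"
| "inner_poly u v (Suc (Suc n)) =
    (\<Sum>k\<le>Suc n. of_nat (Suc n choose k) * inner_poly u v k * inner_poly u v (Suc n - k))"

fun left_poly :: "'a::comm_semiring_1 \<Rightarrow> 'a \<Rightarrow> 'a \<Rightarrow> nat \<Rightarrow> 'a" where
  "left_poly u v a 0 = 1"
| "left_poly u v a (Suc n) =
    a * (\<Sum>k\<le>n. of_nat (n choose k) * left_poly u v a k * inner_poly u v (n - k))"

fun right_poly :: "'a::comm_semiring_1 \<Rightarrow> 'a \<Rightarrow> 'a \<Rightarrow> nat \<Rightarrow> 'a" where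
  "right_poly u v b 0 = 1"
| "right_poly u v b (Suc n) =
    b * (\<Sum>k\<le>n. of_nat (n choose k) * inner_poly u v k * right_poly u v b (n - k))"

lemma sum_inner_weight:
  assumes "finite S" "0 \<notin> S"
  shows "(\<Sum>w\<in>permutations_of_set S. inner_weight u v w) = inner_poly u v (card S)"
  using assms
proof (induction S rule: finite_remove_Min_induct)
  case (remove_Min S)
  show ?case
  proof (cases "S - {Min S} = {}")
    case True
    then have "S = {Min S}"
      using Min_in[OF remove_Min.hyps] by blast
    moreover have "0 < Min S"
      using Min_in[OF remove_Min.hyps] remove_Min.prems by (auto intro: gr0I)
    ultimately show ?thesis
      by (metis inner_poly.simps(2) inner_weight_singleton permutations_of_set_singleton
          sum.insert_if sum.empty card_1_singleton_iff add_0_right finite.emptyI empty_iff)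
  next
    case False
    then obtain n where "card (S - {Min S}) = Suc n"
      using remove_Min.hyps by (metis card_0_eq finite_Diff not0_implies_Suc)
    then have n: "card S = Suc (Suc n)"
      using card_Suc_Diff1[OF remove_Min.hyps(1) Min_in[OF remove_Min.hyps]] by simp
    have "(\<Sum>w\<in>permutations_of_set S. inner_weight u v w) = 1 *
        (\<Sum>k\<le>card S - 1. of_nat (card S - 1 choose k) * inner_poly u v k * inner_poly u v (card S - 1 - k))"
    proof (rule sum_permutations_of_set_split_Min[OF remove_Min.hyps])
      fix L R assume "\<forall>z\<in>set L. Min S < z" "\<forall>z\<in>set R. Min S < z" "set L \<union> set R = S - {Min S}"
      moreover from this(3) False have "L \<noteq> [] \<or> R \<noteq> []"
        by (metis Un_empty empty_set)
      ultimately show "inner_weight u v (L @ Min S # R) = 1 * inner_weight u v L * inner_weight u v R"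
        by (simp add: inner_weight_append_min)
    next
      fix T assume "T \<subseteq> S - {Min S}"
      then show "(\<Sum>w\<in>permutations_of_set T. inner_weight u v w) = inner_poly u v (card T)"
        using remove_Min.prems by (intro remove_Min.IH) auto
      then show "(\<Sum>w\<in>permutations_of_set T. inner_weight u v w) = inner_poly u v (card T)" .
    qed
    also have "\<dots> = inner_poly u v (card S)"
      by (simp add: n)
    finally show ?thesis .
  qed
qed simp

lemma sum_left_weight:
  assumes "finite S" "0 \<notin> S"
  shows "(\<Sum>w\<in>permutations_of_set S. left_weight u v a w) = left_poly u v a (card S)"
  using assms
proof (induction S rule: finite_remove_Min_induct)
  case (remove_Min S)
  obtain n where n: "card S = Suc n"
    using remove_Min.hyps by (metis card_0_eq not0_implies_Suc)
  have "(\<Sum>w\<in>permutations_of_set S. left_weight u v a w) =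
      a * (\<Sum>k\<le>card S - 1. of_nat (card S - 1 choose k) * left_poly u v a k * inner_poly u v (card S - 1 - k))"
  proof (rule sum_permutations_of_set_split_Min[OF remove_Min.hyps])
    fix L R assume "\<forall>z\<in>set L. Min S < z" "\<forall>z\<in>set R. Min S < z"
    then show "left_weight u v a (L @ Min S # R) = a * left_weight u v a L * inner_weight u v R"
      by (rule left_weight_append_min)
  next
    fix T assume "T \<subseteq> S - {Min S}"
    then show "(\<Sum>w\<in>permutations_of_set T. left_weight u v a w) = left_poly u v a (card T)"
      using remove_Min.prems by (intro remove_Min.IH) auto
    show "(\<Sum>w\<in>permutations_of_set T. inner_weight u v w) = inner_poly u v (card T)"
      using \<open>T \<subseteq> S - {Min S}\<close> remove_Min.hyps remove_Min.prems
      by (intro sum_inner_weight) (auto intro: finite_subset)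
  qed
  then show ?case by (simp add: n)
qed (simp add: left_weight_def right_weight_def peak_weight_def lrmin_def rlmin_def)

lemma sum_right_weight:
  assumes "finite S" "0 \<notin> S"
  shows "(\<Sum>w\<in>permutations_of_set S. right_weight u v b w) = right_poly u v b (card S)"
  using assms
proof (induction S rule: finite_remove_Min_induct)
  case (remove_Min S)
  obtain n where n: "card S = Suc n"
    using remove_Min.hyps by (metis card_0_eq not0_implies_Suc)
  have "(\<Sum>w\<in>permutations_of_set S. right_weight u v b w) =
      b * (\<Sum>k\<le>card S - 1. of_nat (card S - 1 choose k) * inner_poly u v k * right_poly u v b (card S - 1 - k))"
  proof (rule sum_permutations_of_set_split_Min[OF remove_Min.hyps])
    fix L R assume "\<forall>z\<in>set L. Min S < z" "\<forall>z\<in>set R. Min S < z"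
    then show "right_weight u v b (L @ Min S # R) = b * inner_weight u v L * right_weight u v b R"
      by (rule right_weight_append_min)
  next
    fix T assume "T \<subseteq> S - {Min S}"
    then show "(\<Sum>w\<in>permutations_of_set T. right_weight u v b w) = right_poly u v b (card T)"
      using remove_Min.prems by (intro remove_Min.IH) auto
    show "(\<Sum>w\<in>permutations_of_set T. inner_weight u v w) = inner_poly u v (card T)"
      using \<open>T \<subseteq> S - {Min S}\<close> remove_Min.hyps remove_Min.prems
      by (intro sum_inner_weight) (auto intro: finite_subset)
  qed
  then show ?case by (simp add: n)
qed (simp add: left_weight_def right_weight_def peak_weight_def lrmin_def rlmin_def)

lemma sum_permutations_peak_lrmin_rlmin:
  "(\<Sum>\<sigma>\<in>permutations_of_set {1..n+1}.
      u ^ (2 * peaks \<sigma>) * v ^ (n - 2 * peaks \<sigma>) * a ^ (lrmin \<sigma> - 1) * b ^ (rlmin \<sigma> - 1))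
    = (\<Sum>k\<le>n. of_nat (n choose k) * left_poly u v a k * right_poly u v b (n - k))"
proof -
  have "(\<Sum>\<sigma>\<in>permutations_of_set {1..n+1}.
      u ^ (2 * peaks \<sigma>) * v ^ (n - 2 * peaks \<sigma>) * a ^ (lrmin \<sigma> - 1) * b ^ (rlmin \<sigma> - 1))
    = (\<Sum>\<sigma>\<in>permutations_of_set {1..n+1}.
      peak_weight u v \<sigma> * a ^ (lrmin \<sigma> - 1) * b ^ (rlmin \<sigma> - 1))"
    by (intro sum.cong) (auto simp: peak_weight_def length_finite_permutations_of_set)
  also have "\<dots> = 1 * (\<Sum>k\<le>card {1..n+1} - 1. of_nat (card {1..n+1} - 1 choose k) *
      left_poly u v a k * right_poly u v b (card {1..n+1} - 1 - k))"
  proof (rule sum_permutations_of_set_split_Min)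
    fix L R :: "nat list" assume "\<forall>z\<in>set L. Min {1..n+1} < z" "\<forall>z\<in>set R. Min {1..n+1} < z"
    then show "peak_weight u v (L @ Min {1..n+1} # R) * a ^ (lrmin (L @ Min {1..n+1} # R) - 1)
        * b ^ (rlmin (L @ Min {1..n+1} # R) - 1) = 1 * left_weight u v a L * right_weight u v b R"
      using peak_weight_append_min by simp
  next
    fix T assume "T \<subseteq> {1..n+1} - {Min {1..n+1}}"
    then have T: "finite T" "0 \<notin> T"
      by (auto intro: finite_subset)
    show "(\<Sum>w\<in>permutations_of_set T. left_weight u v a w) = left_poly u v a (card T)"
      using T by (rule sum_left_weight)
    show "(\<Sum>w\<in>permutations_of_set T. right_weight u v b w) = right_poly u v b (card T)"
      using T by (rule sum_right_weight)
  qed simp_all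
  finally show ?thesis by simp
qed

definition egf :: "(nat \<Rightarrow> 'a::field_char_0) \<Rightarrow> 'a fps" where
  "egf a = Abs_fps (\<lambda>n. a n / fact n)"

lemma egf_nth_0 [simp]: "egf a $ 0 = a 0"
  by (simp add: egf_def)

lemma fps_deriv_egf: "fps_deriv (egf a) = egf (\<lambda>n. a (Suc n))"
  by (rule fps_ext) (simp add: egf_def field_simps del: of_nat_Suc)

lemma egf_mult: "egf a * egf b = egf (\<lambda>n. \<Sum>k\<le>n. of_nat (n choose k) * a k * b (n - k))"
proof (rule fps_ext)
  fix n
  have "(\<Sum>k\<le>n. of_nat (n choose k) * a k * b (n - k)) / fact n
      = (\<Sum>k\<le>n. a k / fact k * (b (n - k) / fact (n - k)))"
    unfolding sum_divide_distrib by (intro sum.cong refl) (simp add: binomial_fact field_simps)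
  then show "(egf a * egf b) $ n = egf (\<lambda>n. \<Sum>k\<le>n. of_nat (n choose k) * a k * b (n - k)) $ n"
    by (simp add: egf_def fps_mult_nth atLeast0AtMost)
qed

lemma fps_deriv_egf_inner_poly:
  "fps_deriv (egf (inner_poly u v)) = egf (inner_poly u v) * egf (inner_poly u v) - fps_const (v\<^sup>2 - u\<^sup>2)"
proof (rule fps_ext)
  fix n
  show "fps_deriv (egf (inner_poly u v)) $ n
      = (egf (inner_poly u v) * egf (inner_poly u v) - fps_const (v\<^sup>2 - u\<^sup>2)) $ n"
    unfolding fps_deriv_egf egf_mult by (cases n) (simp_all add: egf_def power2_eq_square)
qed

lemma fps_deriv_egf_left_poly:
  "fps_deriv (egf (left_poly u v a)) = fps_const a * (egf (left_poly u v a) * egf (inner_poly u v))"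
  unfolding fps_deriv_egf egf_mult by (simp add: egf_def fps_eq_iff)

lemma fps_deriv_egf_right_poly:
  "fps_deriv (egf (right_poly u v b)) = fps_const b * (egf (inner_poly u v) * egf (right_poly u v b))"
  unfolding fps_deriv_egf egf_mult by (simp add: egf_def fps_eq_iff)

section \<open>Linear and Riccati differential equations for power series\<close>

lemma fps_linear_ode_unique:
  fixes f g h :: "'a::{idom,ring_char_0} fps"
  assumes "fps_deriv f = g * f" "fps_deriv h = g * h" "f $ 0 = h $ 0"
  shows "f = h"
proof -
  define d where "d = f - h"
  have deriv: "fps_deriv d = g * d"
    using assms(1,2) by (simp add: d_def algebra_simps)
  have "\<forall>k\<le>n. d $ k = 0" for n
  proof (induction n)
    case 0
    then show ?case using assms(3) by (simp add: d_def)
  next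
    case (Suc n)
    have "of_nat (Suc n) * d $ Suc n = (g * d) $ n"
      using fps_deriv_nth[of d n] by (simp add: deriv)
    also have "\<dots> = 0"
      using Suc.IH by (simp add: fps_mult_nth)
    finally show ?case
      using Suc.IH le_Suc_eq by (auto simp del: of_nat_Suc)
  qed
  then show ?thesis by (auto simp: d_def fps_eq_iff)
qed

lemma fps_deriv_cosh: "fps_deriv (fps_cosh c) = fps_const c * fps_sinh c"
  and fps_deriv_sinh: "fps_deriv (fps_sinh c) = fps_const c * fps_cosh c"
  by (simp_all add: fps_cosh_def fps_sinh_def algebra_simps flip: fps_const_neg)

lemma fps_cosh_nth_0 [simp]: "fps_cosh c $ 0 = 1"
  and fps_sinh_nth_0 [simp]: "fps_sinh c $ 0 = 0"
  by (simp_all add: fps_cosh_def fps_sinh_def)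

lemma fps_riccati_solution:
  fixes H :: "'a::field_char_0 fps"
  assumes "fps_deriv H = H * H - fps_const (s\<^sup>2)" "H $ 0 = v"
  defines "Q \<equiv> fps_const s * fps_cosh s - fps_const v * fps_sinh s"
  shows "H * Q = - fps_deriv Q"
proof -
  have dQ: "fps_deriv Q = fps_const (s\<^sup>2) * fps_sinh s - fps_const (v * s) * fps_cosh s"
    by (simp add: Q_def fps_deriv_cosh fps_deriv_sinh power2_eq_square flip: fps_const_mult)
  have ddQ: "fps_deriv (fps_deriv Q) = fps_const (s\<^sup>2) * Q"
    by (simp add: dQ Q_def fps_deriv_cosh fps_deriv_sinh power2_eq_square algebra_simps
        flip: fps_const_mult)
  have "H * Q + fps_deriv Q = 0"
  proof (rule fps_linear_ode_unique)
    show "fps_deriv (H * Q + fps_deriv Q) = H * (H * Q + fps_deriv Q)"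
      by (simp add: ddQ assms(1) algebra_simps)
    have "fps_deriv Q $ 0 = - v * s" by (simp add: dQ)
    then show "(H * Q + fps_deriv Q) $ 0 = 0 $ 0"
      by (simp add: Q_def assms(2))
  qed simp
  then show ?thesis by (simp add: eq_neg_iff_add_eq_0)
qed

lemma fps_powr_nth_0 [simp]: "fps_powr G c $ 0 = 1"
  by (simp add: fps_powr_def)

lemma fps_deriv_fps_powr:
  fixes G :: "'a::field_char_0 fps"
  assumes G0: "G $ 0 = 1"
  shows "fps_deriv (fps_powr G c) = fps_const c * fps_deriv G * inverse G * fps_powr G c"
proof -
  define L where "L = fps_ln 1 oo (G - 1)"
  have G1: "(G - 1) $ 0 = 0" using G0 by simp
  have "fps_deriv (fps_ln 1) oo (G - 1) = inverse G"
    using fps_inverse_compose[OF G1, of "1 + fps_X"] G1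
    by (simp add: fps_ln_deriv fps_compose_add_distrib)
  then have dL: "fps_deriv L = inverse G * fps_deriv G"
    by (simp add: L_def fps_compose_deriv[OF G1])
  have P: "fps_powr G c = fps_exp 1 oo (fps_const c * L)"
    by (simp add: fps_powr_def L_def)
  have "(fps_const c * L) $ 0 = 0"
    by (simp add: L_def fps_ln_def)
  then show ?thesis
    by (simp add: P fps_compose_deriv dL mult_ac)
qed

lemma fps_logderiv_const_divide:
  fixes Q :: "'a::field_char_0 fps"
  assumes "c \<noteq> 0" "Q $ 0 \<noteq> 0"
  shows "fps_deriv (fps_const c / Q) * inverse (fps_const c / Q) = - fps_deriv Q * inverse Q"
proof -
  have "Q * inverse Q = 1" using assms(2) by (rule inverse_mult_eq_1')
  moreover have "fps_const c * inverse (fps_const c) = 1"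
    using assms(1) by (simp add: fps_const_inverse)
  ultimately show ?thesis
    using assms by (simp add: fps_divide_unit fps_inverse_deriv fps_inverse_mult power2_eq_square
        algebra_simps)
qed

lemma fps_deriv_egf_left_right_poly:
  "fps_deriv (egf (left_poly u v a) * egf (right_poly u v b))
    = fps_const (a + b) * egf (inner_poly u v) * (egf (left_poly u v a) * egf (right_poly u v b))"
  by (simp add: fps_deriv_egf_left_poly fps_deriv_egf_right_poly algebra_simps flip: fps_const_add)

lemma egf_inner_poly_eq_logderiv:
  fixes u v s :: "'a::field_char_0"
  assumes "s\<^sup>2 = v\<^sup>2 - u\<^sup>2" "s \<noteq> 0"
  defines "G \<equiv> fps_const s / (fps_const s * fps_cosh s - fps_const v * fps_sinh s)"
  shows "egf (inner_poly u v) = fps_deriv G * inverse G"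
proof -
  define Q where "Q = fps_const s * fps_cosh s - fps_const v * fps_sinh s"
  have Q0: "Q $ 0 = s"
    by (simp add: Q_def)
  have HQ: "egf (inner_poly u v) * Q = - fps_deriv Q"
    using fps_deriv_egf_inner_poly assms(1) unfolding Q_def
    by (intro fps_riccati_solution) simp_all
  have "fps_deriv G * inverse G = - fps_deriv Q * inverse Q"
    unfolding G_def Q_def[symmetric] using assms(2) Q0 by (intro fps_logderiv_const_divide) simp_all
  also have "\<dots> = egf (inner_poly u v) * (Q * inverse Q)"
    by (simp add: HQ[symmetric] mult.assoc)
  also have "\<dots> = egf (inner_poly u v)"
    using Q0 assms(2) by (simp add: inverse_mult_eq_1')
  finally show ?thesis ..
qed

theorem theorem4p5:
  fixes u v \<alpha> \<beta> s :: complex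
  assumes "s\<^sup>2 = v\<^sup>2 - u\<^sup>2" and "s \<noteq> 0"
  shows "Abs_fps (\<lambda>n. (\<Sum>\<sigma>\<in>permutations_of_set {1..n+1}.
            u ^ (2 * peaks \<sigma>) * v ^ (n - 2 * peaks \<sigma>) *
            \<alpha> ^ (lrmin \<sigma> - 1) * \<beta> ^ (rlmin \<sigma> - 1)) / of_nat (fact n))
       = fps_powr (fps_const s / (fps_const s * fps_cosh s - fps_const v * fps_sinh s)) (\<alpha> + \<beta>)"
proof -
  define G where "G = fps_const s / (fps_const s * fps_cosh s - fps_const v * fps_sinh s)"
  have G0: "G $ 0 = 1"
    using assms(2) by (simp add: G_def fps_divide_unit)
  have H: "egf (inner_poly u v) = fps_deriv G * inverse G"
    using assms unfolding G_def by (rule egf_inner_poly_eq_logderiv)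
  have "Abs_fps (\<lambda>n. (\<Sum>\<sigma>\<in>permutations_of_set {1..n+1}.
            u ^ (2 * peaks \<sigma>) * v ^ (n - 2 * peaks \<sigma>) *
            \<alpha> ^ (lrmin \<sigma> - 1) * \<beta> ^ (rlmin \<sigma> - 1)) / of_nat (fact n))
      = egf (left_poly u v \<alpha>) * egf (right_poly u v \<beta>)"
    unfolding egf_mult sum_permutations_peak_lrmin_rlmin[symmetric] by (simp add: egf_def)
  also have "\<dots> = fps_powr G (\<alpha> + \<beta>)"
  proof (rule fps_linear_ode_unique[where g = "fps_const (\<alpha> + \<beta>) * egf (inner_poly u v)"])
    show "fps_deriv (egf (left_poly u v \<alpha>) * egf (right_poly u v \<beta>))
        = fps_const (\<alpha> + \<beta>) * egf (inner_poly u v) * (egf (left_poly u v \<alpha>) * egf (right_poly u v \<beta>))"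
      by (rule fps_deriv_egf_left_right_poly)
    show "fps_deriv (fps_powr G (\<alpha> + \<beta>))
        = fps_const (\<alpha> + \<beta>) * egf (inner_poly u v) * fps_powr G (\<alpha> + \<beta>)"
      by (simp add: fps_deriv_fps_powr[OF G0] H mult.assoc)
  qed simp
  finally show ?thesis
    unfolding G_def .
qed

end
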